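(* For probability densities $F_N,H_N$ on $\mathbb{R}^N$ with finite mean, \[ d_{T1,N}(\Phi[F_N],\Phi[H_N])\le\Big(1-\frac{1-\gamma}{4N}\Big)d_{T1,N}(F_N,H_N). \]
   Context: Fix $N\ge2$, rates $\lambda>0,\mu>0$, $\gamma=\lambda/(\lambda+\mu)$, and a probability density $g$ on $\mathbb{R}$ with $g\in L^2$, zero mean and finite second moment. Let $Q[F](v)=\binom{N}{2}^{-1}\sum_{i<j}\frac{1}{2\pi}\int_0^{2\pi}F(v_{ij}(\theta))d\theta$ and $R_j[F](v)=\int_{\mathbb{R}}\frac{1}{2\pi}\int_0^{2\pi}g(w\cos\theta-v_j\sin\theta)F(v_j(w,\theta))d\theta dw$, where $v_{ij}(\theta)$ replaces $(v_i,v_j)$ in $v$ by $(v_i\cos\theta+v_j\sin\theta,-v_i\sin\theta+v_j\cos\theta)$ and $v_j(w,\theta)$ replaces $v_j$ by $v_j\cos\theta+w\sin\theta$. $\Phi[F]=\gamma Q[F]+(1-\gamma)\frac1N\sum_{j=1}^NR_j[F]$. With $\hat f(\xi)=\int f(v)e^{-iv\cdot\xi}dv$, $d_{T1,N}(f,h)=\sup_{\xi\in\mathbb{R}^N\setminus\{0\}}|\hat f(\xi)-\hat h(\xi)|/|\xi|$. *)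

theory Defs
  imports "HOL-Analysis.Analysis"
begin

definition is_density :: "('a::euclidean_space \<Rightarrow> real) \<Rightarrow> bool" where
  "is_density f \<longleftrightarrow> f \<in> borel_measurable lborel \<and> (\<forall>v. 0 \<le> f v)
     \<and> integrable lborel f \<and> (LINT v|lborel. f v) = 1"

definition vij :: "(real, 'n::finite) vec \<Rightarrow> 'n \<Rightarrow> 'n \<Rightarrow> real \<Rightarrow> (real, 'n) vec" where
  "vij v i j \<theta> = (\<chi> k. if k = i then v$i * cos \<theta> + v$j * sin \<theta>
                    else if k = j then - v$i * sin \<theta> + v$j * cos \<theta> else v$k)"

definition vjw :: "(real, 'n::finite) vec \<Rightarrow> 'n \<Rightarrow> real \<Rightarrow> real \<Rightarrow> (real, 'n) vec" where
  "vjw v j w \<theta> = (\<chi> k. if k = j then v$j * cos \<theta> + w * sin \<theta> else v$k)"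

definition Qop :: "((real, 'n::{finite,linorder}) vec \<Rightarrow> real) \<Rightarrow> (real, 'n) vec \<Rightarrow> real" where
  "Qop F v = (1 / real (CARD('n::{finite,linorder}) choose 2)) *
     (\<Sum>(i,j)\<in>{(i,j). i < j}. (1 / (2*pi)) * (LBINT \<theta>=0..2*pi. F (vij v i j \<theta>)))"

definition Rop :: "(real \<Rightarrow> real) \<Rightarrow> ((real, 'n::finite) vec \<Rightarrow> real) \<Rightarrow> 'n \<Rightarrow> (real, 'n) vec \<Rightarrow> real" where
  "Rop g F j v = (LINT w|lborel. (1 / (2*pi)) *
     (LBINT \<theta>=0..2*pi. g (w * cos \<theta> - v$j * sin \<theta>) * F (vjw v j w \<theta>)))"

definition Phi :: "real \<Rightarrow> real \<Rightarrow> (real \<Rightarrow> real) \<Rightarrow> ((real, 'n::{finite,linorder}) vec \<Rightarrow> real)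
                   \<Rightarrow> (real, 'n) vec \<Rightarrow> real" where
  "Phi lam mu g F v = (let \<gamma> = lam / (lam + mu) in
     \<gamma> * Qop F v + (1 - \<gamma>) * (1 / real CARD('n::{finite,linorder})) * (\<Sum>j\<in>UNIV. Rop g F j v))"

definition fourier :: "((real, 'n::finite) vec \<Rightarrow> real) \<Rightarrow> (real, 'n) vec \<Rightarrow> complex" where
  "fourier f \<xi> = (LINT v|lborel. complex_of_real (f v) * cis (- (v \<bullet> \<xi>)))"

definition dT1 :: "((real, 'n::finite) vec \<Rightarrow> real) \<Rightarrow> ((real, 'n) vec \<Rightarrow> real) \<Rightarrow> ereal" where
  "dT1 f h = (SUP \<xi>\<in>UNIV - {0}. ereal (cmod (fourier f \<xi> - fourier h \<xi>) / norm \<xi>))"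

end

theory Submission
  imports Defs
begin

text \<open>Under the Fourier transform, \<open>Q\<close> becomes the average of \<open>fourier F\<close> over the rotations
  of \<open>\<xi>\<close> in the coordinate planes, which preserve \<open>|\<xi>|\<close>, and \<open>R\<^sub>j\<close> becomes the mean over
  \<open>\<theta>\<close> of \<open>char_fun g (\<xi>\<^sub>j sin \<theta>) * fourier F \<xi>'\<close>, where \<open>\<xi>'\<close> is \<open>\<xi>\<close> with \<open>\<xi>\<^sub>j\<close> replaced
  by \<open>\<xi>\<^sub>j cos \<theta>\<close>. Since \<open>|char_fun g| \<le> 1\<close> and \<open>|\<xi>'| \<le> |\<xi>| - \<xi>\<^sub>j\<^sup>2 sin\<^sup>2 \<theta> / (2|\<xi>|)\<close>, the mean
  \<open>1/2\<close> of \<open>sin\<^sup>2 \<theta>\<close> and the sum \<open>|\<xi>|\<^sup>2\<close> of the \<open>\<xi>\<^sub>j\<^sup>2\<close> save \<open>|\<xi>|/4\<close> out of \<open>N|\<xi>|\<close> in the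
  \<open>R\<close>-part. Both transforms are computed by Fubini, using that rotations in a coordinate plane (of
  velocity space for \<open>Q\<close>, of velocity space times the background velocity for \<open>R\<^sub>j\<close>) preserve
  Lebesgue measure, being products of three shears.\<close>

section \<open>Rotations in a coordinate plane preserve Lebesgue measure\<close>

definition shear :: "'a::euclidean_space \<Rightarrow> 'a \<Rightarrow> real \<Rightarrow> 'a \<Rightarrow> 'a" where
  "shear b1 b2 t x = x + (t * (x \<bullet> b2)) *\<^sub>R b1"

lemma shear_measurable [measurable]: "shear b1 b2 t \<in> borel_measurable borel"
  unfolding shear_def by measurable

lemma sum_Basis_fun_upd:
  fixes f :: "'a::euclidean_space \<Rightarrow> real"
  assumes "b \<in> Basis"
  shows "(\<Sum>i\<in>Basis. (f(b := y)) i *\<^sub>R i) = (\<Sum>i\<in>Basis. f i *\<^sub>R i) + (y - f b) *\<^sub>R b"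
proof -
  have "(\<Sum>i\<in>Basis-{b}. (f(b := y)) i *\<^sub>R i) = (\<Sum>i\<in>Basis-{b}. f i *\<^sub>R i)"
    by (rule sum.cong) auto
  then show ?thesis
    using assms by (simp add: sum.remove algebra_simps)
qed

text \<open>A shear moves every line parallel to \<open>b1\<close> by a translation, so Tonelli in the
  coordinate \<open>b1\<close> and translation invariance of \<open>lborel\<close> on \<open>\<real>\<close> show that it preserves measure.\<close>

lemma nn_integral_shear:
  fixes h :: "'a::euclidean_space \<Rightarrow> ennreal"
  assumes b: "b1 \<in> Basis" "b2 \<in> Basis" "b1 \<noteq> b2" and [measurable]: "h \<in> borel_measurable borel"
  shows "(\<integral>\<^sup>+x. h (shear b1 b2 t x) \<partial>lborel) = (\<integral>\<^sup>+x. h x \<partial>lborel)"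
proof -
  interpret P: product_sigma_finite "\<lambda>_::'a. lborel :: real measure" by standard
  define G where "G = (\<lambda>f::'a \<Rightarrow> real. h (\<Sum>b\<in>Basis. f b *\<^sub>R b))"
  define I where "I = Basis - {b1}"
  have BI: "Basis = insert b1 I" "finite I" "b1 \<notin> I"
    using b by (auto simp: I_def)
  have shear_coords: "shear b1 b2 t (\<Sum>b\<in>Basis. f b *\<^sub>R b) = (\<Sum>b\<in>Basis. (f(b1 := f b1 + t * f b2)) b *\<^sub>R b)" for f
    unfolding shear_def sum_Basis_fun_upd[OF b(1)] inner_sum_left_Basis[OF b(2)] by simp
  have [measurable]: "G \<in> borel_measurable (\<Pi>\<^sub>M b\<in>Basis. lborel)"
    unfolding G_def by measurable
  have [measurable]: "(\<lambda>f. G (f(b1 := f b1 + t * f b2))) \<in> borel_measurable (\<Pi>\<^sub>M b\<in>Basis. lborel)"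
    unfolding G_def shear_coords[symmetric] shear_def by measurable
  have [measurable]: "(\<lambda>x. h (shear b1 b2 t x)) \<in> borel_measurable borel"
    by measurable
  have "(\<integral>\<^sup>+x. h (shear b1 b2 t x) \<partial>lborel) = (\<integral>\<^sup>+f. G (f(b1 := f b1 + t * f b2)) \<partial>(\<Pi>\<^sub>M b\<in>Basis. lborel))"
    by (subst lborel_eq, subst nn_integral_distr) (simp_all add: G_def shear_coords del: fun_upd_apply)
  also have "\<dots> = (\<integral>\<^sup>+x. (\<integral>\<^sup>+y. G ((x(b1 := y))(b1 := y + t * x b2)) \<partial>lborel) \<partial>(\<Pi>\<^sub>M b\<in>I. lborel))"
    unfolding BI(1) by (subst P.product_nn_integral_insert) (use BI b in auto)
  also have "\<dots> = (\<integral>\<^sup>+x. (\<integral>\<^sup>+y. G (x(b1 := y)) \<partial>lborel) \<partial>(\<Pi>\<^sub>M b\<in>I. lborel))"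
  proof (rule nn_integral_cong)
    fix x :: "'a \<Rightarrow> real"
    have meas: "(\<lambda>y::real. G (x(b1 := y))) \<in> borel_measurable borel"
      unfolding G_def sum_Basis_fun_upd[OF b(1)] by measurable
    show "(\<integral>\<^sup>+y. G ((x(b1 := y))(b1 := y + t * x b2)) \<partial>lborel) = (\<integral>\<^sup>+y. G (x(b1 := y)) \<partial>lborel)"
      using nn_integral_real_affine[OF meas, of 1 "t * x b2"] by (simp add: add.commute)
  qed
  also have "\<dots> = (\<integral>\<^sup>+f. G f \<partial>(\<Pi>\<^sub>M b\<in>Basis. lborel))"
    unfolding BI(1) by (subst P.product_nn_integral_insert) (use BI b in auto)
  also have "\<dots> = (\<integral>\<^sup>+x. h x \<partial>lborel)"
    by (subst (2) lborel_eq) (simp add: nn_integral_distr G_def)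
  finally show ?thesis .
qed

lemma distr_shear:
  assumes "b1 \<in> Basis" "b2 \<in> Basis" "b1 \<noteq> b2"
  shows "distr lborel borel (shear b1 b2 t) = (lborel :: 'a::euclidean_space measure)"
proof (rule measure_eqI)
  fix A :: "'a set" assume "A \<in> sets (distr lborel borel (shear b1 b2 t))"
  then have [measurable]: "A \<in> sets borel" by simp
  have "emeasure (distr lborel borel (shear b1 b2 t)) A = (\<integral>\<^sup>+x. indicator A (shear b1 b2 t x) \<partial>lborel)"
  proof -
    have "shear b1 b2 t -` A \<in> sets lborel"
      using measurable_sets[OF shear_measurable, of A] by simp
    then have "emeasure lborel (shear b1 b2 t -` A) = (\<integral>\<^sup>+x. indicator (shear b1 b2 t -` A) x \<partial>lborel)"
      by simp
    then show ?thesis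
      by (simp add: emeasure_distr indicator_def)
  qed
  also have "\<dots> = emeasure lborel A"
    using nn_integral_shear[OF assms, of "indicator A"] by simp
  finally show "emeasure (distr lborel borel (shear b1 b2 t)) A = emeasure lborel A" .
qed simp

definition plane_rot :: "'a::euclidean_space \<Rightarrow> 'a \<Rightarrow> real \<Rightarrow> real \<Rightarrow> 'a \<Rightarrow> 'a" where
  "plane_rot b1 b2 c s x = x + ((c - 1) * (x \<bullet> b1) + s * (x \<bullet> b2)) *\<^sub>R b1
                               + ((c - 1) * (x \<bullet> b2) - s * (x \<bullet> b1)) *\<^sub>R b2"

lemma plane_rot_measurable [measurable]: "plane_rot b1 b2 c s \<in> borel_measurable borel"
  unfolding plane_rot_def by measurable

lemma inner_Basis_pair:
  assumes "b1 \<in> Basis" "b2 \<in> Basis" "b1 \<noteq> b2"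
  shows "b1 \<bullet> b1 = 1" "b2 \<bullet> b2 = 1" "b1 \<bullet> b2 = 0" "b2 \<bullet> b1 = 0"
  using assms by (auto simp: inner_Basis)

text \<open>Paeth's decomposition of a rotation into three shears (valid away from the angle \<open>\<pi>\<close>).\<close>

lemma plane_rot_eq_shears:
  assumes b: "b1 \<in> Basis" "b2 \<in> Basis" "b1 \<noteq> b2" and cs: "c\<^sup>2 + s\<^sup>2 = 1" "c \<noteq> -1"
  shows "plane_rot b1 b2 c s = shear b1 b2 (s / (1 + c)) \<circ> shear b2 b1 (-s) \<circ> shear b1 b2 (s / (1 + c))"
proof
  fix x :: 'a
  define a where "a = s / (1 + c)"
  define x1 where "x1 = x \<bullet> b1"
  define x2 where "x2 = x \<bullet> b2"
  have "1 + c \<noteq> 0" using cs(2) by auto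
  then have as: "a * s = 1 - c" and ac: "a * (1 + c) = s"
    using cs(1) by (auto simp: a_def field_simps power2_eq_square)
  have "(shear b1 b2 a \<circ> shear b2 b1 (-s) \<circ> shear b1 b2 a) x
     = x + (a * x2 + a * (x2 - s * (x1 + a * x2))) *\<^sub>R b1 + (- s * (x1 + a * x2)) *\<^sub>R b2"
    by (simp add: shear_def inner_add_left inner_Basis_pair[OF b] x1_def x2_def algebra_simps;
        simp only: scaleR_add_left[symmetric]; simp)
  also have "a * x2 + a * (x2 - s * (x1 + a * x2)) = (c - 1) * x1 + s * x2"
    using as ac by algebra
  also have "- s * (x1 + a * x2) = (c - 1) * x2 - s * x1"
    using as ac by algebra
  finally show "plane_rot b1 b2 c s x = (shear b1 b2 a \<circ> shear b2 b1 (-s) \<circ> shear b1 b2 a) x"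
    by (simp add: plane_rot_def x1_def x2_def)
qed

lemma plane_rot_half_turn:
  assumes b: "b1 \<in> Basis" "b2 \<in> Basis" "b1 \<noteq> b2"
  shows "plane_rot b1 b2 (-1) 0 = plane_rot b1 b2 0 1 \<circ> plane_rot b1 b2 0 1"
proof
  fix x :: 'a
  let ?y = "x - (x \<bullet> b1) *\<^sub>R b1 - (x \<bullet> b1) *\<^sub>R b1 - (x \<bullet> b2) *\<^sub>R b2 - (x \<bullet> b2) *\<^sub>R b2"
  have "plane_rot b1 b2 0 1 (plane_rot b1 b2 0 1 x) = ?y"
    by (simp add: plane_rot_def inner_add_left inner_diff_left inner_Basis_pair[OF b] algebra_simps;
        simp only: mult_2_right scaleR_add_left add.assoc)
  moreover have "plane_rot b1 b2 (-1) 0 x = ?y"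
    by (simp add: plane_rot_def algebra_simps; simp only: mult_2_right scaleR_add_left add.assoc)
  ultimately show "plane_rot b1 b2 (-1) 0 x = (plane_rot b1 b2 0 1 \<circ> plane_rot b1 b2 0 1) x"
    by simp
qed

lemma distr_plane_rot:
  assumes b: "b1 \<in> Basis" "b2 \<in> Basis" "b1 \<noteq> b2" and cs: "c\<^sup>2 + s\<^sup>2 = 1"
  shows "distr lborel borel (plane_rot b1 b2 c s) = (lborel :: 'a::euclidean_space measure)"
proof -
  have generic: "distr lborel borel (plane_rot b1 b2 c s) = (lborel :: 'a measure)"
    if "c\<^sup>2 + s\<^sup>2 = 1" "c \<noteq> -1" for c s
  proof -
    let ?t = "s / (1 + c)"
    have "distr lborel borel (plane_rot b1 b2 c s) =
      distr (distr (distr lborel borel (shear b1 b2 ?t)) borel (shear b2 b1 (-s))) borel (shear b1 b2 ?t)"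
      by (simp add: plane_rot_eq_shears[OF b that] distr_distr comp_assoc)
    then show ?thesis
      using b by (simp add: distr_shear)
  qed
  show ?thesis
  proof (cases "c = -1")
    case True
    then have "s = 0" using cs by (simp add: power2_eq_square)
    with True have "distr lborel borel (plane_rot b1 b2 c s)
        = distr (distr lborel borel (plane_rot b1 b2 0 1)) borel (plane_rot b1 b2 0 1)"
      by (simp add: plane_rot_half_turn[OF b] distr_distr)
    then show ?thesis
      by (simp add: generic)
  qed (use generic cs in auto)
qed

lemma inner_plane_rot:
  assumes b: "b1 \<in> Basis" "b2 \<in> Basis" "b1 \<noteq> b2" and cs: "c\<^sup>2 + s\<^sup>2 = 1"
  shows "plane_rot b1 b2 c s x \<bullet> plane_rot b1 b2 c s y = x \<bullet> y"
proof -
  define x1 x2 y1 y2 where "x1 = x \<bullet> b1" "x2 = x \<bullet> b2" "y1 = y \<bullet> b1" "y2 = y \<bullet> b2"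
  have "plane_rot b1 b2 c s x \<bullet> plane_rot b1 b2 c s y = x \<bullet> y +
     (((c - 1) * y1 + s * y2) * x1 + ((c - 1) * y2 - s * y1) * x2 + ((c - 1) * x1 + s * x2) * y1
      + ((c - 1) * x1 + s * x2) * ((c - 1) * y1 + s * y2) + ((c - 1) * x2 - s * x1) * y2
      + ((c - 1) * x2 - s * x1) * ((c - 1) * y2 - s * y1))"
    unfolding plane_rot_def inner_add_left inner_add_right inner_scaleR_left inner_scaleR_right inner_Basis_pair[OF b]
    by (simp add: x1_x2_y1_y2_def inner_commute[of b1] inner_commute[of b2]; simp add: algebra_simps)
  also have "\<dots> = x \<bullet> y"
    using cs by algebra
  finally show ?thesis .
qed

lemma integral_plane_rot:
  fixes f :: "'a::euclidean_space \<Rightarrow> 'b::{banach, second_countable_topology}"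
  assumes "b1 \<in> Basis" "b2 \<in> Basis" "b1 \<noteq> b2" "c\<^sup>2 + s\<^sup>2 = 1" "f \<in> borel_measurable borel"
  shows "(LINT x|lborel. f (plane_rot b1 b2 c s x)) = (LINT x|lborel. f x)"
  using integral_distr[of "plane_rot b1 b2 c s" lborel borel f] distr_plane_rot[OF assms(1-4)] assms(5)
  by simp

lemma nn_integral_plane_rot:
  fixes f :: "'a::euclidean_space \<Rightarrow> ennreal"
  assumes "b1 \<in> Basis" "b2 \<in> Basis" "b1 \<noteq> b2" "c\<^sup>2 + s\<^sup>2 = 1" "f \<in> borel_measurable borel"
  shows "(\<integral>\<^sup>+x. f (plane_rot b1 b2 c s x) \<partial>lborel) = (\<integral>\<^sup>+x. f x \<partial>lborel)"
  using nn_integral_distr[of "plane_rot b1 b2 c s" lborel borel f] distr_plane_rot[OF assms(1-4)] assms(5)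
  by simp

section \<open>Fourier transforms of the collision operators\<close>

lemma is_density_measurable:
  "is_density f \<Longrightarrow> f \<in> borel_measurable borel"
  by (simp add: is_density_def)

lemma is_density_nonneg: "is_density f \<Longrightarrow> 0 \<le> f x"
  by (simp add: is_density_def)

lemma is_density_nn_integral: "is_density f \<Longrightarrow> (\<integral>\<^sup>+x. ennreal (f x) \<partial>lborel) = 1"
  unfolding is_density_def by (subst nn_integral_eq_integral) auto

lemma borel_measurable_cis [measurable]: "cis \<in> borel_measurable borel"
  by (intro borel_measurable_continuous_onI continuous_intros)

definition circle_mean :: "(real \<Rightarrow> complex) \<Rightarrow> complex" where
  "circle_mean f = complex_of_real (1 / (2*pi)) * (LINT \<theta>|lborel. indicator {0..2*pi} \<theta> * f \<theta>)"

lemma integrable_rotation_kernel: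
  fixes P :: "'a::euclidean_space \<Rightarrow> real" and e :: "'a \<Rightarrow> complex"
  assumes P: "is_density P" and b: "b1 \<in> Basis" "b2 \<in> Basis" "b1 \<noteq> b2"
    and e: "e \<in> borel_measurable borel" "\<And>x. norm (e x) \<le> 1"
  shows "integrable (lborel \<Otimes>\<^sub>M lborel)
           (\<lambda>(\<theta>, x). indicator {0..2*pi} \<theta> * complex_of_real (P (plane_rot b1 b2 (cos \<theta>) (sin \<theta>) x)) * e x)"
proof -
  define R where "R = (\<lambda>\<theta>. plane_rot b1 b2 (cos \<theta>) (sin \<theta>))"
  have [measurable]: "P \<in> borel_measurable borel" "e \<in> borel_measurable borel"
    using P e(1) by (simp_all add: is_density_measurable)
  have "(\<lambda>p. plane_rot b1 b2 (cos (fst p)) (sin (fst p)) (snd p)) \<in> borel_measurable (lborel \<Otimes>\<^sub>M lborel)"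
    unfolding plane_rot_def by measurable
  then have [measurable]: "(\<lambda>p. P (plane_rot b1 b2 (cos (fst p)) (sin (fst p)) (snd p)))
      \<in> borel_measurable (lborel \<Otimes>\<^sub>M lborel)"
    using measurable_compose[of _ _ _ P] by (auto simp: comp_def)
  have nn_P_rot: "(\<integral>\<^sup>+x. ennreal (P (R \<theta> x)) \<partial>lborel) = 1" for \<theta>
    using nn_integral_plane_rot[OF b, of "cos \<theta>" "sin \<theta>" "\<lambda>x. ennreal (P x)"] is_density_nn_integral[OF P]
    by (simp add: R_def)
  have "(\<integral>\<^sup>+p. ennreal (norm (indicator {0..2*pi} (fst p) * complex_of_real (P (R (fst p) (snd p))) * e (snd p)))
          \<partial>(lborel \<Otimes>\<^sub>M lborel))
      \<le> (\<integral>\<^sup>+\<theta>. \<integral>\<^sup>+x. indicator {0..2*pi} \<theta> * ennreal (P (R \<theta> x)) \<partial>lborel \<partial>lborel)"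
    unfolding R_def by (subst lborel.nn_integral_fst[symmetric])
       (auto intro!: nn_integral_mono simp: norm_mult is_density_nonneg[OF P] indicator_def mult_left_le e(2))
  also have "\<dots> = (\<integral>\<^sup>+\<theta>. indicator {0..2*pi} \<theta> * (\<integral>\<^sup>+x. ennreal (P (R \<theta> x)) \<partial>lborel) \<partial>lborel)"
    by (intro nn_integral_cong nn_integral_cmult) (simp add: R_def)
  also have "\<dots> = 2 * pi"
    by (simp add: nn_P_rot)
  finally show ?thesis
    unfolding R_def split_beta' by (intro integrableI_bounded) (auto simp: le_less_trans)
qed

lemma
  fixes P :: "'a::euclidean_space \<Rightarrow> real" and e :: "'a \<Rightarrow> complex"
  assumes P: "is_density P" and b: "b1 \<in> Basis" "b2 \<in> Basis" "b1 \<noteq> b2"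
    and e: "e \<in> borel_measurable borel" "\<And>x. norm (e x) \<le> 1"
  shows integrable_rotation_average:
      "integrable lborel (\<lambda>x. complex_of_real ((1 / (2*pi)) *
         (LBINT \<theta>=0..2*pi. P (plane_rot b1 b2 (cos \<theta>) (sin \<theta>) x))) * e x)"
    and integral_rotation_average:
      "(LINT x|lborel. complex_of_real ((1 / (2*pi)) *
         (LBINT \<theta>=0..2*pi. P (plane_rot b1 b2 (cos \<theta>) (sin \<theta>) x))) * e x)
       = circle_mean (\<lambda>\<theta>. LINT x|lborel. complex_of_real (P (plane_rot b1 b2 (cos \<theta>) (sin \<theta>) x)) * e x)"
    and integrable_rotated_integral:
      "integrable lborel (\<lambda>\<theta>. indicator {0..2*pi} \<theta> *
         (LINT x|lborel. complex_of_real (P (plane_rot b1 b2 (cos \<theta>) (sin \<theta>) x)) * e x))"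
proof -
  define R where "R = (\<lambda>\<theta>. plane_rot b1 b2 (cos \<theta>) (sin \<theta>))"
  define K where "K = (\<lambda>\<theta> x. indicator {0..2*pi} \<theta> * complex_of_real (P (R \<theta> x)) * e x)"
  have K: "integrable (lborel \<Otimes>\<^sub>M lborel) (case_prod K)"
    using integrable_rotation_kernel[OF P b e] by (simp add: K_def R_def)
  have average: "complex_of_real ((1 / (2*pi)) * (LBINT \<theta>=0..2*pi. P (R \<theta> x))) * e x
      = (1 / (2*pi)) * (LINT \<theta>|lborel. K \<theta> x)" for x
  proof -
    have "(LBINT \<theta>=0..2*pi. P (R \<theta> x)) = (LINT \<theta>|lborel. indicator {0..2*pi} \<theta> * P (R \<theta> x))"
      by (simp add: zero_ereal_def interval_integral_Icc set_lebesgue_integral_def)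
    then have "complex_of_real ((1 / (2*pi)) * (LBINT \<theta>=0..2*pi. P (R \<theta> x))) * e x
        = (1 / (2*pi)) * (LINT \<theta>|lborel. complex_of_real (indicator {0..2*pi} \<theta> * P (R \<theta> x)) * e x)"
      by (simp flip: integral_complex_of_real integral_mult_left_zero)
    also have "\<dots> = (1 / (2*pi)) * (LINT \<theta>|lborel. K \<theta> x)"
      unfolding K_def by (rule arg_cong, rule Bochner_Integration.integral_cong) (auto simp: indicator_def)
    finally show ?thesis .
  qed
  have inner_integral: "(LINT x|lborel. K \<theta> x)
      = indicator {0..2*pi} \<theta> * (LINT x|lborel. complex_of_real (P (R \<theta> x)) * e x)" for \<theta>
    by (simp add: K_def mult.assoc)
  show "integrable lborel (\<lambda>x. complex_of_real ((1 / (2*pi)) *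
         (LBINT \<theta>=0..2*pi. P (plane_rot b1 b2 (cos \<theta>) (sin \<theta>) x))) * e x)"
    unfolding average[unfolded R_def] using lborel_pair.integrable_snd[OF K] by simp
  show "integrable lborel (\<lambda>\<theta>. indicator {0..2*pi} \<theta> *
         (LINT x|lborel. complex_of_real (P (plane_rot b1 b2 (cos \<theta>) (sin \<theta>) x)) * e x))"
    using lborel_pair.integrable_fst[OF K] unfolding inner_integral[unfolded R_def] .
  show "(LINT x|lborel. complex_of_real ((1 / (2*pi)) *
         (LBINT \<theta>=0..2*pi. P (plane_rot b1 b2 (cos \<theta>) (sin \<theta>) x))) * e x)
       = circle_mean (\<lambda>\<theta>. LINT x|lborel. complex_of_real (P (plane_rot b1 b2 (cos \<theta>) (sin \<theta>) x)) * e x)"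
    unfolding average[unfolded R_def] integral_mult_right_zero circle_mean_def
      lborel_pair.integral_snd[OF K] lborel_pair.integral_fst[OF K, symmetric] inner_integral[unfolded R_def] ..
qed

lemma is_density_pair:
  fixes f :: "'a::euclidean_space \<Rightarrow> real" and g :: "'b::euclidean_space \<Rightarrow> real"
  assumes f: "is_density f" and g: "is_density g"
  shows "is_density (\<lambda>p. f (fst p) * g (snd p))"
proof -
  have [measurable]: "f \<in> borel_measurable borel" "g \<in> borel_measurable borel"
    using f g by (simp_all add: is_density_measurable)
  have nonneg: "0 \<le> f (fst p) * g (snd p)" for p
    by (simp add: f g is_density_nonneg)
  have "(\<integral>\<^sup>+p. ennreal (f (fst p) * g (snd p)) \<partial>lborel)
      = (\<integral>\<^sup>+x. \<integral>\<^sup>+y. ennreal (f x) * ennreal (g y) \<partial>lborel \<partial>lborel)"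
    by (simp add: lborel_prod[symmetric] lborel.nn_integral_fst[symmetric] ennreal_mult' f g is_density_nonneg)
  also have "\<dots> = 1"
    by (simp add: nn_integral_cmult is_density_nn_integral[OF f] is_density_nn_integral[OF g])
  finally have nn: "(\<integral>\<^sup>+p. ennreal (f (fst p) * g (snd p)) \<partial>lborel) = 1" .
  have int: "integrable lborel (\<lambda>p. f (fst p) * g (snd p))"
    using nn nonneg by (intro integrableI_bounded) (auto simp: borel_prod[symmetric])
  show ?thesis
    unfolding is_density_def
    using int nn nonneg by (auto simp: borel_prod[symmetric] integral_eq_nn_integral)
qed

lemma axis_component: "axis i x $ k = (if k = i then x else 0)"
  by (simp add: axis_def)

lemma vij_eq_plane_rot:
  fixes v :: "(real,'n::finite) vec"
  assumes "i \<noteq> j"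
  shows "vij v i j \<theta> = plane_rot (axis i 1) (axis j 1) (cos \<theta>) (sin \<theta>) v"
  using assms by (auto simp: vec_eq_iff vij_def plane_rot_def inner_axis axis_component algebra_simps)

text \<open>\<open>R\<^sub>j\<close> averages over rotations in the plane spanned by the coordinate \<open>v\<^sub>j\<close> and the
  background velocity \<open>w\<close>.\<close>

lemma vjw_eq_plane_rot:
  fixes v :: "(real,'n::finite) vec"
  shows "plane_rot (axis j 1, 0) (0, 1) (cos \<theta>) (sin \<theta>) (v, w) = (vjw v j w \<theta>, w * cos \<theta> - v$j * sin \<theta>)"
  by (auto simp: vec_eq_iff vjw_def plane_rot_def inner_axis axis_component algebra_simps)

lemma norm_vij:
  fixes \<xi> :: "(real,'n::finite) vec"
  assumes "i \<noteq> j"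
  shows "norm (vij \<xi> i j \<theta>) = norm \<xi>"
  using inner_plane_rot[of "axis i 1" "axis j 1" "cos \<theta>" "sin \<theta>" \<xi> \<xi>] assms
  by (simp add: vij_eq_plane_rot norm_eq_sqrt_inner axis_eq_axis)

lemma inner_vec_remove:
  fixes x y :: "(real,'n::finite) vec"
  shows "x \<bullet> y = x$j * y$j + (\<Sum>k\<in>UNIV-{j}. x$k * y$k)"
  by (simp add: inner_vec_def sum.remove)

lemma inner_vjw:
  fixes v \<xi> :: "(real,'n::finite) vec"
  shows "v \<bullet> \<xi> = vjw v j w \<theta> \<bullet> vjw \<xi> j 0 \<theta> - (w * cos \<theta> - v$j * sin \<theta>) * sin \<theta> * \<xi>$j"
proof -
  have "(\<Sum>k\<in>UNIV-{j}. vjw v j w \<theta> $ k * vjw \<xi> j 0 \<theta> $ k) = (\<Sum>k\<in>UNIV-{j}. v $ k * \<xi> $ k)"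
    by (rule sum.cong) (auto simp: vjw_def)
  then show ?thesis
    unfolding inner_vec_remove[of v \<xi> j] inner_vec_remove[of "vjw v j w \<theta>" "vjw \<xi> j 0 \<theta>" j]
    by (simp add: vjw_def) (use sin_cos_squared_add[of \<theta>] in algebra)
qed

lemma norm_vjw_zero_squared:
  fixes \<xi> :: "(real,'n::finite) vec"
  shows "(norm (vjw \<xi> j 0 \<theta>))\<^sup>2 = (norm \<xi>)\<^sup>2 - (\<xi>$j)\<^sup>2 * (sin \<theta>)\<^sup>2"
proof -
  have "(\<Sum>k\<in>UNIV-{j}. vjw \<xi> j 0 \<theta> $ k * vjw \<xi> j 0 \<theta> $ k) = (\<Sum>k\<in>UNIV-{j}. \<xi> $ k * \<xi> $ k)"
    by (rule sum.cong) (auto simp: vjw_def)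
  then show ?thesis
    unfolding power2_norm_eq_inner inner_vec_remove[of \<xi> \<xi> j] inner_vec_remove[of "vjw \<xi> j 0 \<theta>" "vjw \<xi> j 0 \<theta>" j]
    by (simp add: vjw_def) (use sin_cos_squared_add[of \<theta>] in algebra)
qed

lemma
  fixes G :: "(real,'n::finite) vec \<Rightarrow> real"
  assumes G: "is_density G" and ij: "i \<noteq> j"
  shows integrable_fourier_vij_average:
      "integrable lborel (\<lambda>v. complex_of_real ((1 / (2*pi)) * (LBINT \<theta>=0..2*pi. G (vij v i j \<theta>))) * cis (-(v \<bullet> \<xi>)))"
    and fourier_vij_average:
      "fourier (\<lambda>v. (1 / (2*pi)) * (LBINT \<theta>=0..2*pi. G (vij v i j \<theta>))) \<xi>
       = circle_mean (\<lambda>\<theta>. fourier G (vij \<xi> i j \<theta>))"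
    and integrable_fourier_vij:
      "integrable lborel (\<lambda>\<theta>. indicator {0..2*pi} \<theta> * fourier G (vij \<xi> i j \<theta>))"
proof -
  have b: "axis i (1::real) \<in> Basis" "axis j (1::real) \<in> Basis" "axis i 1 \<noteq> axis j (1::real)"
    using ij by (auto simp: axis_eq_axis)
  have [measurable]: "G \<in> borel_measurable borel"
    using G by (rule is_density_measurable)
  have e: "(\<lambda>v. cis (-(v \<bullet> \<xi>))) \<in> borel_measurable borel"
    by measurable
  have inner: "(LINT v|lborel. complex_of_real (G (plane_rot (axis i 1) (axis j 1) (cos \<theta>) (sin \<theta>) v)) * cis (-(v \<bullet> \<xi>)))
      = fourier G (vij \<xi> i j \<theta>)" for \<theta>
  proof -
    let ?R = "plane_rot (axis i 1) (axis j 1) (cos \<theta>) (sin \<theta>) :: (real,'n) vec \<Rightarrow> _"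
    have "(LINT v|lborel. complex_of_real (G (?R v)) * cis (-(v \<bullet> \<xi>)))
        = (LINT v|lborel. complex_of_real (G (?R v)) * cis (-(?R v \<bullet> ?R \<xi>)))"
      by (simp add: inner_plane_rot[OF b])
    also have "\<dots> = fourier G (?R \<xi>)"
      unfolding fourier_def
      by (rule integral_plane_rot[OF b, of _ _ "\<lambda>u. complex_of_real (G u) * cis (-(u \<bullet> ?R \<xi>))"]) auto
    finally show ?thesis
      using ij by (simp add: vij_eq_plane_rot)
  qed
  note rot = integrable_rotation_average[OF G b e] integral_rotation_average[OF G b e]
    integrable_rotated_integral[OF G b e]
  show "integrable lborel (\<lambda>v. complex_of_real ((1 / (2*pi)) * (LBINT \<theta>=0..2*pi. G (vij v i j \<theta>))) * cis (-(v \<bullet> \<xi>)))"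
    using rot(1) ij by (simp add: vij_eq_plane_rot)
  show "fourier (\<lambda>v. (1 / (2*pi)) * (LBINT \<theta>=0..2*pi. G (vij v i j \<theta>))) \<xi>
       = circle_mean (\<lambda>\<theta>. fourier G (vij \<xi> i j \<theta>))"
    using rot(2) ij by (simp add: fourier_def vij_eq_plane_rot inner)
  show "integrable lborel (\<lambda>\<theta>. indicator {0..2*pi} \<theta> * fourier G (vij \<xi> i j \<theta>))"
    using rot(3) by (simp add: inner)
qed

definition char_fun :: "(real \<Rightarrow> real) \<Rightarrow> real \<Rightarrow> complex" where
  "char_fun g t = (LINT w|lborel. complex_of_real (g w) * cis (w * t))"

lemma norm_char_fun_le:
  assumes "is_density g"
  shows "norm (char_fun g t) \<le> 1"
proof -
  have "norm (char_fun g t) \<le> (LINT w|lborel. norm (complex_of_real (g w) * cis (w * t)))"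
    unfolding char_fun_def by (rule integral_norm_bound)
  also have "\<dots> = 1"
    using assms by (simp add: is_density_def norm_mult)
  finally show ?thesis .
qed

lemma vjw_rotation_Basis:
  "(axis j 1, 0) \<in> (Basis :: ((real,'n::finite) vec \<times> real) set)" "(0, 1) \<in> (Basis :: ((real,'n) vec \<times> real) set)"
  "((axis j 1, 0) :: (real,'n) vec \<times> real) \<noteq> (0, 1)"
  by (auto simp: Basis_prod_def)

lemma integral_vjw_rotation:
  fixes G :: "(real,'n::finite) vec \<Rightarrow> real" and g :: "real \<Rightarrow> real"
  assumes G: "is_density G" and g: "is_density g"
  shows "(LINT q|lborel. complex_of_real (G (vjw (fst q) j (snd q) \<theta>) * g (snd q * cos \<theta> - fst q $ j * sin \<theta>))
            * cis (-(fst q \<bullet> \<xi>)))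
         = char_fun g (sin \<theta> * \<xi>$j) * fourier G (vjw \<xi> j 0 \<theta>)"
proof -
  define T where "T = plane_rot ((axis j 1, 0) :: (real,'n) vec \<times> real) (0, 1) (cos \<theta>) (sin \<theta>)"
  have T: "T (v, w) = (vjw v j w \<theta>, w * cos \<theta> - v$j * sin \<theta>)" for v w
    unfolding T_def by (rule vjw_eq_plane_rot)
  define P where "P = (\<lambda>q::(real,'n) vec \<times> real. G (fst q) * g (snd q))"
  have P: "is_density P"
    unfolding P_def using G g by (rule is_density_pair)
  define h where "h = (\<lambda>q::(real,'n) vec \<times> real.
    complex_of_real (P q) * cis (-(fst q \<bullet> vjw \<xi> j 0 \<theta>) + snd q * sin \<theta> * \<xi>$j))"
  have [measurable]: "P \<in> borel_measurable borel"
    using P by (rule is_density_measurable)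
  have [measurable]: "(\<lambda>q::(real,'n) vec \<times> real. cis (-(fst q \<bullet> vjw \<xi> j 0 \<theta>) + snd q * sin \<theta> * \<xi>$j))
      \<in> borel_measurable borel"
    by (intro borel_measurable_continuous_onI continuous_intros)
  then have [measurable]: "h \<in> borel_measurable borel"
    unfolding h_def by measurable
  have "(\<integral>\<^sup>+q. ennreal (norm (h q)) \<partial>lborel) = 1"
    using P by (simp add: h_def norm_mult is_density_nn_integral is_density_nonneg)
  then have "integrable lborel h"
    by (intro integrableI_bounded) auto
  then have h_int: "integrable (lborel \<Otimes>\<^sub>M lborel) (\<lambda>(v, w). h (v, w))"
    by (simp add: lborel_prod)
  have "(LINT q|lborel. complex_of_real (G (vjw (fst q) j (snd q) \<theta>) * g (snd q * cos \<theta> - fst q $ j * sin \<theta>))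
            * cis (-(fst q \<bullet> \<xi>))) = (LINT q|lborel. h (T q))"
  proof (rule Bochner_Integration.integral_cong[OF refl])
    fix q :: "(real,'n) vec \<times> real"
    obtain v w where q: "q = (v, w)"
      by (cases q)
    show "complex_of_real (G (vjw (fst q) j (snd q) \<theta>) * g (snd q * cos \<theta> - fst q $ j * sin \<theta>))
        * cis (-(fst q \<bullet> \<xi>)) = h (T q)"
      unfolding q h_def T P_def by (simp add: inner_vjw[of v \<xi> j w \<theta>] algebra_simps)
  qed
  also have "\<dots> = (LINT q|lborel. h q)"
    unfolding T_def by (rule integral_plane_rot[OF vjw_rotation_Basis(1)[of j] vjw_rotation_Basis(2,3)]) auto
  also have "\<dots> = (LINT v|lborel. LINT w|lborel. h (v, w))"
    using lborel_pair.integral_fst[OF h_int] by (simp add: lborel_prod)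
  also have "\<dots> = (LINT v|lborel. complex_of_real (G v) * cis (-(v \<bullet> vjw \<xi> j 0 \<theta>)) * char_fun g (sin \<theta> * \<xi>$j))"
    by (simp add: h_def P_def char_fun_def cis_mult algebra_simps flip: integral_mult_right_zero)
  also have "\<dots> = char_fun g (sin \<theta> * \<xi>$j) * fourier G (vjw \<xi> j 0 \<theta>)"
    by (simp add: fourier_def mult.commute)
  finally show ?thesis .
qed

lemma
  fixes G :: "(real,'n::finite) vec \<Rightarrow> real" and g :: "real \<Rightarrow> real"
  assumes G: "is_density G" and g: "is_density g"
  shows integrable_fourier_Rop: "integrable lborel (\<lambda>v. complex_of_real (Rop g G j v) * cis (-(v \<bullet> \<xi>)))"
    and fourier_Rop: "fourier (Rop g G j) \<xi> = circle_mean (\<lambda>\<theta>. char_fun g (sin \<theta> * \<xi>$j) * fourier G (vjw \<xi> j 0 \<theta>))"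
    and integrable_fourier_vjw:
      "integrable lborel (\<lambda>\<theta>. indicator {0..2*pi} \<theta> * (char_fun g (sin \<theta> * \<xi>$j) * fourier G (vjw \<xi> j 0 \<theta>)))"
proof -
  define T where "T = (\<lambda>\<theta>. plane_rot ((axis j 1, 0) :: (real,'n) vec \<times> real) (0, 1) (cos \<theta>) (sin \<theta>))"
  have T: "T \<theta> q = (vjw (fst q) j (snd q) \<theta>, snd q * cos \<theta> - fst q $ j * sin \<theta>)" for \<theta> q
    unfolding T_def using vjw_eq_plane_rot[of j \<theta> "fst q" "snd q"] by simp
  define P where "P = (\<lambda>q::(real,'n) vec \<times> real. G (fst q) * g (snd q))"
  have P: "is_density P"
    unfolding P_def using G g by (rule is_density_pair)
  have e: "(\<lambda>q::(real,'n) vec \<times> real. cis (-(fst q \<bullet> \<xi>))) \<in> borel_measurable borel"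
    by (intro borel_measurable_continuous_onI continuous_intros)
  note b = vjw_rotation_Basis(1)[of j] vjw_rotation_Basis(2) vjw_rotation_Basis(3)[of j]
  note rot = integrable_rotation_average[OF P b e] integral_rotation_average[OF P b e]
    integrable_rotated_integral[OF P b e]
  have inner: "(LINT q|lborel. complex_of_real (P (T \<theta> q)) * cis (-(fst q \<bullet> \<xi>)))
      = char_fun g (sin \<theta> * \<xi>$j) * fourier G (vjw \<xi> j 0 \<theta>)" for \<theta>
    using integral_vjw_rotation[OF G g, of j \<theta> \<xi>] by (simp add: P_def T split_beta')
  define f where "f = (\<lambda>q. complex_of_real ((1 / (2*pi)) * (LBINT \<theta>=0..2*pi. P (T \<theta> q))) * cis (-(fst q \<bullet> \<xi>)))"
  have "integrable lborel f"
    using rot(1) by (simp add: f_def T_def)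
  then have f: "integrable (lborel \<Otimes>\<^sub>M lborel) (\<lambda>(v, w). f (v, w))"
    by (simp add: lborel_prod)
  have Rop: "complex_of_real (Rop g G j v) * cis (-(v \<bullet> \<xi>)) = (LINT w|lborel. f (v, w))" for v
    by (simp add: Rop_def f_def T P_def mult.commute flip: integral_complex_of_real integral_mult_left_zero)
  show "integrable lborel (\<lambda>v. complex_of_real (Rop g G j v) * cis (-(v \<bullet> \<xi>)))"
    unfolding Rop using lborel_pair.integrable_fst[OF f] by simp
  show "integrable lborel (\<lambda>\<theta>. indicator {0..2*pi} \<theta> * (char_fun g (sin \<theta> * \<xi>$j) * fourier G (vjw \<xi> j 0 \<theta>)))"
    using rot(3) by (simp add: inner[unfolded T_def])
  have "fourier (Rop g G j) \<xi> = (LINT v|lborel. LINT w|lborel. f (v, w))"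
    unfolding fourier_def Rop ..
  also have "\<dots> = (LINT q|lborel. f q)"
    using lborel_pair.integral_fst[OF f] by (simp add: lborel_prod)
  also have "\<dots> = circle_mean (\<lambda>\<theta>. char_fun g (sin \<theta> * \<xi>$j) * fourier G (vjw \<xi> j 0 \<theta>))"
    using rot(2) by (simp add: f_def T_def inner[unfolded T_def])
  finally show "fourier (Rop g G j) \<xi> = circle_mean (\<lambda>\<theta>. char_fun g (sin \<theta> * \<xi>$j) * fourier G (vjw \<xi> j 0 \<theta>))" .
qed

lemma fourier_Phi:
  fixes G :: "(real,'n::{finite,linorder}) vec \<Rightarrow> real"
  assumes G: "is_density G" and g: "is_density g"
  shows "fourier (Phi lam mu g G) \<xi> =
     complex_of_real (lam / (lam + mu) / real (CARD('n) choose 2)) *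
       (\<Sum>(i, j)\<in>{(i, j). i < j}. circle_mean (\<lambda>\<theta>. fourier G (vij \<xi> i j \<theta>)))
   + complex_of_real ((1 - lam / (lam + mu)) / real CARD('n)) *
       (\<Sum>j\<in>UNIV. circle_mean (\<lambda>\<theta>. char_fun g (sin \<theta> * \<xi>$j) * fourier G (vjw \<xi> j 0 \<theta>)))"
proof -
  define P where "P = {(i, j). (i::'n) < j}"
  define q where "q = (\<lambda>p v. (1 / (2*pi)) * (LBINT \<theta>=0..2*pi. G (vij v (fst p) (snd p) \<theta>)))"
  define \<gamma> C N where "\<gamma> = lam / (lam + mu)" and "C = real (CARD('n) choose 2)" and "N = real CARD('n)"
  let ?e = "\<lambda>v. cis (-(v \<bullet> \<xi>))"
  have Pij: "fst p \<noteq> snd p" if "p \<in> P" for p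
    using that by (auto simp: P_def)
  have "complex_of_real (Phi lam mu g G v) * ?e v =
      complex_of_real (\<gamma> / C) * (\<Sum>p\<in>P. complex_of_real (q p v) * ?e v)
    + complex_of_real ((1 - \<gamma>) / N) * (\<Sum>j\<in>UNIV. complex_of_real (Rop g G j v) * ?e v)" for v
    by (simp add: Phi_def Qop_def P_def q_def \<gamma>_def C_def N_def case_prod_beta' sum_distrib_left
        sum_distrib_right algebra_simps)
  then have "fourier (Phi lam mu g G) \<xi> =
      complex_of_real (\<gamma> / C) * (\<Sum>p\<in>P. fourier (q p) \<xi>)
    + complex_of_real ((1 - \<gamma>) / N) * (\<Sum>j\<in>UNIV. fourier (Rop g G j) \<xi>)"
    using integrable_fourier_vij_average[OF G Pij] integrable_fourier_Rop[OF G g]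
    by (simp add: fourier_def integral_sum q_def)
  also have "(\<Sum>p\<in>P. fourier (q p) \<xi>) = (\<Sum>(i, j)\<in>P. circle_mean (\<lambda>\<theta>. fourier G (vij \<xi> i j \<theta>)))"
    using fourier_vij_average[OF G Pij] by (auto simp: q_def case_prod_beta' intro!: sum.cong)
  also have "(\<Sum>j\<in>UNIV. fourier (Rop g G j) \<xi>)
      = (\<Sum>j\<in>UNIV. circle_mean (\<lambda>\<theta>. char_fun g (sin \<theta> * \<xi>$j) * fourier G (vjw \<xi> j 0 \<theta>)))"
    using fourier_Rop[OF G g] by simp
  finally show ?thesis
    by (simp add: P_def \<gamma>_def C_def N_def)
qed

section \<open>The contraction estimate\<close>

lemma circle_integral_const_minus_sin_squared:
  "(LINT \<theta>|lborel. indicator {0..2*pi} \<theta> * (a - b * (sin \<theta>)\<^sup>2)) = 2 * pi * a - pi * b"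
proof -
  let ?F = "\<lambda>\<theta>. a * \<theta> - b * (\<theta> - sin \<theta> * cos \<theta>) / 2"
  have "(LBINT \<theta>=ereal 0..ereal (2*pi). a - b * (sin \<theta>)\<^sup>2) = ?F (2*pi) - ?F 0"
  proof (rule interval_integral_FTC_finite)
    show "continuous_on {min 0 (2*pi)..max 0 (2*pi)} (\<lambda>\<theta>. a - b * (sin \<theta>)\<^sup>2)"
      by (intro continuous_intros)
    fix x :: real
    have "(?F has_real_derivative (a - b * (1 - (cos x * cos x - sin x * sin x)) / 2)) (at x)"
      by (auto intro!: derivative_eq_intros)
    moreover have "cos x * cos x = 1 - sin x * sin x"
      using sin_cos_squared_add3[of x] by linarith
    then have "a - b * (1 - (cos x * cos x - sin x * sin x)) / 2 = a - b * (sin x)\<^sup>2"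
      by (simp add: power2_eq_square)
    ultimately show "(?F has_vector_derivative a - b * (sin x)\<^sup>2) (at x within {min 0 (2*pi)..max 0 (2*pi)})"
      by (auto simp: has_real_derivative_iff_has_vector_derivative[symmetric] intro: has_field_derivative_at_within)
  qed
  moreover have "(LBINT \<theta>=ereal 0..ereal (2*pi). a - b * (sin \<theta>)\<^sup>2)
      = (LINT \<theta>|lborel. indicator {0..2*pi} \<theta> * (a - b * (sin \<theta>)\<^sup>2))"
    by (subst interval_integral_Icc) (simp_all add: set_lebesgue_integral_def)
  ultimately show ?thesis
    by (simp add: algebra_simps)
qed

lemma integrable_circle:
  fixes f :: "real \<Rightarrow> 'a::{banach, second_countable_topology, real_normed_algebra_1}"
  assumes "continuous_on {0..2*pi} f"
  shows "integrable lborel (\<lambda>\<theta>. indicator {0..2*pi} \<theta> * f \<theta>)"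
proof -
  have "(\<lambda>\<theta>. indicator {0..2*pi} \<theta> * f \<theta>) = (\<lambda>\<theta>. indicator {0..2*pi} \<theta> *\<^sub>R f \<theta>)"
    by (auto simp: indicator_def)
  then show ?thesis
    using borel_integrable_atLeastAtMost'[OF assms] unfolding set_integrable_def by simp
qed

lemma norm_circle_mean_diff_le:
  fixes f h :: "real \<Rightarrow> complex"
  assumes f: "integrable lborel (\<lambda>\<theta>. indicator {0..2*pi} \<theta> * f \<theta>)"
    and h: "integrable lborel (\<lambda>\<theta>. indicator {0..2*pi} \<theta> * h \<theta>)"
    and bound: "\<And>\<theta>. \<theta> \<in> {0..2*pi} \<Longrightarrow> norm (f \<theta> - h \<theta>) \<le> a - b * (sin \<theta>)\<^sup>2"
  shows "norm (circle_mean f - circle_mean h) \<le> a - b / 2"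
proof -
  let ?D = "\<lambda>\<theta>. indicator {0..2*pi} \<theta> * f \<theta> - indicator {0..2*pi} \<theta> * h \<theta>"
  have "norm (LINT \<theta>|lborel. ?D \<theta>) \<le> (LINT \<theta>|lborel. norm (?D \<theta>))"
    by (rule integral_norm_bound)
  also have "\<dots> \<le> (LINT \<theta>|lborel. indicator {0..2*pi} \<theta> * (a - b * (sin \<theta>)\<^sup>2))"
  proof (rule integral_mono)
    show "integrable lborel (\<lambda>\<theta>. norm (?D \<theta>))"
      using f h by auto
    show "integrable lborel (\<lambda>\<theta>. indicator {0..2*pi} \<theta> * (a - b * (sin \<theta>)\<^sup>2))"
      by (intro integrable_circle continuous_intros)
  qed (auto simp: indicator_def bound simp flip: right_diff_distrib)
  also have "\<dots> = 2 * pi * (a - b / 2)"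
    unfolding circle_integral_const_minus_sin_squared by (simp add: algebra_simps)
  finally have integral_bound: "norm (LINT \<theta>|lborel. ?D \<theta>) \<le> 2 * pi * (a - b / 2)" .
  have "circle_mean f - circle_mean h = complex_of_real (1 / (2*pi)) * (LINT \<theta>|lborel. ?D \<theta>)"
    using f h by (simp add: circle_mean_def right_diff_distrib)
  then have "norm (circle_mean f - circle_mean h) = norm (LINT \<theta>|lborel. ?D \<theta>) / (2 * pi)"
    by (simp add: norm_divide norm_mult)
  also have "\<dots> \<le> 2 * pi * (a - b / 2) / (2 * pi)"
    using integral_bound by (intro divide_right_mono) auto
  finally show ?thesis
    by simp
qed

lemma norm_vjw_zero_le:
  fixes \<xi> :: "(real,'n::finite) vec"
  assumes "\<xi> \<noteq> 0"
  shows "norm (vjw \<xi> j 0 \<theta>) \<le> norm \<xi> - (\<xi>$j)\<^sup>2 * (sin \<theta>)\<^sup>2 / (2 * norm \<xi>)"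
proof -
  define a b where "a = norm \<xi>" and "b = (\<xi>$j)\<^sup>2 * (sin \<theta>)\<^sup>2"
  have a: "a > 0"
    using assms by (simp add: a_def)
  have "(\<xi>$j)\<^sup>2 \<le> a\<^sup>2"
    unfolding a_def by (metis abs_ge_zero component_le_norm_cart power2_abs power_mono)
  moreover have "(sin \<theta>)\<^sup>2 \<le> 1"
    by (simp add: abs_square_le_1)
  ultimately have "b \<le> a\<^sup>2"
    unfolding b_def by (metis mult_left_le mult.commute zero_le_power2 order_trans)
  then have "b / (2 * a) \<le> a\<^sup>2 / (2 * a)"
    using a by (intro divide_right_mono) auto
  also have "\<dots> \<le> a"
    using a by (simp add: power2_eq_square field_simps)
  finally have nonneg: "0 \<le> a - b / (2 * a)"
    by simp
  have "(a - b / (2 * a))\<^sup>2 = a\<^sup>2 - b + (b / (2 * a))\<^sup>2"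
    using a by (simp add: power2_eq_square field_simps)
  then have "(norm (vjw \<xi> j 0 \<theta>))\<^sup>2 \<le> (a - b / (2 * a))\<^sup>2"
    by (simp add: norm_vjw_zero_squared a_def b_def)
  then have "norm (vjw \<xi> j 0 \<theta>) \<le> a - b / (2 * a)"
    using nonneg by (rule power2_le_imp_le)
  then show ?thesis
    by (simp add: a_def b_def)
qed

lemma norm_circle_mean_fourier_vij_diff_le:
  fixes F H :: "(real,'n::finite) vec \<Rightarrow> real"
  assumes F: "is_density F" and H: "is_density H" and ij: "i \<noteq> j"
    and bound: "\<And>\<eta>. norm (fourier F \<eta> - fourier H \<eta>) \<le> d * norm \<eta>"
  shows "norm (circle_mean (\<lambda>\<theta>. fourier F (vij \<xi> i j \<theta>)) - circle_mean (\<lambda>\<theta>. fourier H (vij \<xi> i j \<theta>)))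
           \<le> d * norm \<xi>"
proof -
  have "norm (circle_mean (\<lambda>\<theta>. fourier F (vij \<xi> i j \<theta>)) - circle_mean (\<lambda>\<theta>. fourier H (vij \<xi> i j \<theta>)))
      \<le> d * norm \<xi> - 0 / 2"
    by (intro norm_circle_mean_diff_le integrable_fourier_vij F H ij) (simp, metis bound norm_vij[OF ij])
  then show ?thesis
    by simp
qed

lemma norm_circle_mean_fourier_vjw_diff_le:
  fixes F H :: "(real,'n::finite) vec \<Rightarrow> real"
  assumes F: "is_density F" and H: "is_density H" and g: "is_density g" and "\<xi> \<noteq> 0" "0 \<le> d"
    and bound: "\<And>\<eta>. norm (fourier F \<eta> - fourier H \<eta>) \<le> d * norm \<eta>"
  shows "norm (circle_mean (\<lambda>\<theta>. char_fun g (sin \<theta> * \<xi>$j) * fourier F (vjw \<xi> j 0 \<theta>))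
               - circle_mean (\<lambda>\<theta>. char_fun g (sin \<theta> * \<xi>$j) * fourier H (vjw \<xi> j 0 \<theta>)))
           \<le> d * (norm \<xi> - (\<xi>$j)\<^sup>2 / (4 * norm \<xi>))"
proof -
  let ?a = "d * norm \<xi>" and ?b = "d * (\<xi>$j)\<^sup>2 / (2 * norm \<xi>)"
  have "norm (char_fun g (sin \<theta> * \<xi>$j) * fourier F (vjw \<xi> j 0 \<theta>) - char_fun g (sin \<theta> * \<xi>$j) * fourier H (vjw \<xi> j 0 \<theta>))
      \<le> ?a - ?b * (sin \<theta>)\<^sup>2" for \<theta>
  proof -
    have "norm (char_fun g (sin \<theta> * \<xi>$j) * fourier F (vjw \<xi> j 0 \<theta>) - char_fun g (sin \<theta> * \<xi>$j) * fourier H (vjw \<xi> j 0 \<theta>))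
        = norm (char_fun g (sin \<theta> * \<xi>$j)) * norm (fourier F (vjw \<xi> j 0 \<theta>) - fourier H (vjw \<xi> j 0 \<theta>))"
      by (simp add: norm_mult flip: right_diff_distrib)
    also have "\<dots> \<le> 1 * (d * norm (vjw \<xi> j 0 \<theta>))"
      by (intro mult_mono norm_char_fun_le g bound) auto
    also have "\<dots> \<le> d * (norm \<xi> - (\<xi>$j)\<^sup>2 * (sin \<theta>)\<^sup>2 / (2 * norm \<xi>))"
      using norm_vjw_zero_le[OF \<open>\<xi> \<noteq> 0\<close>] \<open>0 \<le> d\<close> by (simp add: mult_left_mono)
    finally show ?thesis
      by (simp add: algebra_simps)
  qed
  then have "norm (circle_mean (\<lambda>\<theta>. char_fun g (sin \<theta> * \<xi>$j) * fourier F (vjw \<xi> j 0 \<theta>))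
               - circle_mean (\<lambda>\<theta>. char_fun g (sin \<theta> * \<xi>$j) * fourier H (vjw \<xi> j 0 \<theta>)))
           \<le> ?a - ?b / 2"
    by (intro norm_circle_mean_diff_le integrable_fourier_vjw F H g)
  also have "?a - ?b / 2 = d * (norm \<xi> - (\<xi>$j)\<^sup>2 / (4 * norm \<xi>))"
    by (simp add: field_simps)
  finally show ?thesis .
qed

lemma card_less_pairs: "card {(i, j). (i::'n::{finite,linorder}) < j} = CARD('n) choose 2"
proof -
  let ?L = "{(i, j). (i::'n) < j}" and ?U = "{(i, j). (j::'n) < i}" and ?D = "{(i, j). (i::'n) = j}"
  have UNIV: "(UNIV :: ('n \<times> 'n) set) = (?L \<union> ?U) \<union> ?D"
    by (auto simp: not_less_iff_gr_or_eq)
  have "card ?U = card ?L"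
    by (rule bij_betw_same_card[of "\<lambda>(i, j). (j, i)"]) (auto simp: bij_betw_def inj_on_def image_def)
  moreover have "card ?D = CARD('n)"
    by (rule bij_betw_same_card[of fst]) (auto simp: bij_betw_def inj_on_def image_def)
  moreover have "CARD('n) * CARD('n) = card (UNIV :: ('n \<times> 'n) set)"
    by (simp add: card_prod UNIV_Times_UNIV[symmetric] del: UNIV_Times_UNIV)
  moreover have "\<dots> = card (?L \<union> ?U) + card ?D"
    unfolding UNIV by (rule card_Un_disjoint) auto
  moreover have "card (?L \<union> ?U) = card ?L + card ?U"
    by (rule card_Un_disjoint) auto
  ultimately have "CARD('n) * CARD('n) = 2 * card ?L + CARD('n)"
    by simp
  moreover have "2 * (CARD('n) choose 2) = CARD('n) * CARD('n) - CARD('n)"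
    by (simp add: choose_two diff_mult_distrib2)
  ultimately show ?thesis
    by simp
qed

lemma fourier_Phi_diff_le:
  fixes F H :: "(real,'n::{finite,linorder}) vec \<Rightarrow> real"
  assumes "CARD('n) \<ge> 2" "0 < lam" "0 < mu"
    and g: "is_density g" and F: "is_density F" and H: "is_density H"
    and "\<xi> \<noteq> 0" "0 \<le> d" and bound: "\<And>\<eta>. norm (fourier F \<eta> - fourier H \<eta>) \<le> d * norm \<eta>"
  shows "norm (fourier (Phi lam mu g F) \<xi> - fourier (Phi lam mu g H) \<xi>)
           \<le> (1 - (1 - lam / (lam + mu)) / (4 * real CARD('n))) * d * norm \<xi>"
proof -
  define P where "P = {(i, j). (i::'n) < j}"
  define \<gamma> C N where "\<gamma> = lam / (lam + mu)" and "C = real (CARD('n) choose 2)" and "N = real CARD('n)"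
  have \<gamma>: "0 < \<gamma>" "\<gamma> < 1" and C: "0 < C" and N: "0 < N"
    using assms(1-3) by (auto simp: \<gamma>_def C_def N_def field_simps)
  define A where "A = (\<lambda>p. circle_mean (\<lambda>\<theta>. fourier F (vij \<xi> (fst p) (snd p) \<theta>))
                          - circle_mean (\<lambda>\<theta>. fourier H (vij \<xi> (fst p) (snd p) \<theta>)))"
  define B where "B = (\<lambda>j. circle_mean (\<lambda>\<theta>. char_fun g (sin \<theta> * \<xi>$j) * fourier F (vjw \<xi> j 0 \<theta>))
                          - circle_mean (\<lambda>\<theta>. char_fun g (sin \<theta> * \<xi>$j) * fourier H (vjw \<xi> j 0 \<theta>)))"
  have "fourier (Phi lam mu g F) \<xi> - fourier (Phi lam mu g H) \<xi>
      = complex_of_real (\<gamma> / C) * (\<Sum>p\<in>P. A p) + complex_of_real ((1 - \<gamma>) / N) * (\<Sum>j\<in>UNIV. B j)"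
    unfolding fourier_Phi[OF F g] fourier_Phi[OF H g]
    by (simp add: A_def B_def P_def \<gamma>_def C_def N_def case_prod_beta' sum_subtractf algebra_simps)
  also have "norm \<dots> \<le> \<gamma> / C * norm (\<Sum>p\<in>P. A p) + (1 - \<gamma>) / N * norm (\<Sum>j\<in>UNIV. B j)"
  proof -
    have abs: "\<bar>\<gamma> / C\<bar> = \<gamma> / C" "\<bar>(1 - \<gamma>) / N\<bar> = (1 - \<gamma>) / N"
      using \<gamma> C N by auto
    show ?thesis
      by (rule order_trans[OF norm_triangle_ineq]) (simp only: norm_mult norm_of_real abs order_refl)
  qed
  also have "\<dots> \<le> \<gamma> / C * (\<Sum>p\<in>P. norm (A p)) + (1 - \<gamma>) / N * (\<Sum>j\<in>UNIV. norm (B j))"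
    using \<gamma> C N by (intro add_mono mult_left_mono norm_sum) auto
  also have "\<dots> \<le> \<gamma> / C * (\<Sum>p\<in>P. d * norm \<xi>) + (1 - \<gamma>) / N * (\<Sum>j\<in>UNIV. d * (norm \<xi> - (\<xi>$j)\<^sup>2 / (4 * norm \<xi>)))"
    using \<gamma> C N unfolding A_def B_def P_def
    by (intro add_mono mult_left_mono sum_mono norm_circle_mean_fourier_vij_diff_le
        norm_circle_mean_fourier_vjw_diff_le F H g bound assms(7,8)) auto
  also have "\<dots> = (1 - (1 - \<gamma>) / (4 * N)) * d * norm \<xi>"
  proof -
    have "(\<Sum>j\<in>UNIV. (\<xi>$j)\<^sup>2) = (norm \<xi>)\<^sup>2"
      unfolding power2_norm_eq_inner by (simp add: inner_vec_def power2_eq_square)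
    moreover have "real (card P) = C"
      by (simp add: P_def C_def card_less_pairs)
    ultimately show ?thesis
      using C N \<open>\<xi> \<noteq> 0\<close>
      by (simp add: sum_subtractf sum_distrib_left[symmetric] sum_divide_distrib[symmetric] N_def
          field_simps power2_eq_square)
  qed
  finally show ?thesis
    by (simp add: \<gamma>_def N_def)
qed

lemma dT1_le_scaled:
  fixes F H F' H' :: "(real,'n::finite) vec \<Rightarrow> real"
  assumes "0 < c" and F: "is_density F" and H: "is_density H"
    and transfer: "\<And>d \<xi>. 0 \<le> d \<Longrightarrow> (\<And>\<eta>. norm (fourier F \<eta> - fourier H \<eta>) \<le> d * norm \<eta>) \<Longrightarrow> \<xi> \<noteq> 0
                     \<Longrightarrow> norm (fourier F' \<xi> - fourier H' \<xi>) \<le> c * d * norm \<xi>"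
  shows "dT1 F' H' \<le> ereal c * dT1 F H"
proof -
  have quotient_le: "ereal (norm (fourier F \<eta> - fourier H \<eta>) / norm \<eta>) \<le> dT1 F H" if "\<eta> \<noteq> 0" for \<eta>
    unfolding dT1_def by (rule SUP_upper) (use that in auto)
  have "0 \<le> dT1 F H"
    by (rule order_trans[OF _ quotient_le[of "axis undefined 1"]]) (simp_all add: axis_eq_0_iff)
  then consider "dT1 F H = \<infinity>" | d where "dT1 F H = ereal d" "0 \<le> d"
    by (cases "dT1 F H") auto
  then show ?thesis
  proof cases
    case 1
    then show ?thesis
      using \<open>0 < c\<close> by simp
  next
    case (2 d)
    have "norm (fourier F \<eta> - fourier H \<eta>) \<le> d * norm \<eta>" for \<eta>
    proof (cases "\<eta> = 0")
      case True
      then show ?thesis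
        using F H by (simp add: fourier_def is_density_def)
    next
      case False
      then show ?thesis
        using quotient_le[OF False] 2 by (simp add: divide_le_eq mult.commute)
    qed
    then have "norm (fourier F' \<xi> - fourier H' \<xi>) / norm \<xi> \<le> c * d" if "\<xi> \<noteq> 0" for \<xi>
      using transfer[OF \<open>0 \<le> d\<close> _ that] that by (simp add: divide_le_eq)
    then have "dT1 F' H' \<le> ereal (c * d)"
      unfolding dT1_def by (intro SUP_least) auto
    then show ?thesis
      using 2 by simp
  qed
qed

theorem lemma5:
  fixes F H :: "(real, 'n::{finite,linorder}) vec \<Rightarrow> real" and g :: "real \<Rightarrow> real"
    and lam mu :: real
  assumes "CARD('n) \<ge> 2" and "lam > 0" and "mu > 0"
    and "is_density g" and "integrable lborel (\<lambda>x. (g x)^2)"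
    and "integrable lborel (\<lambda>x. x * g x)" and "(LINT x|lborel. x * g x) = 0"
    and "integrable lborel (\<lambda>x. x^2 * g x)"
    and "is_density F" and "is_density H"
    and "integrable lborel (\<lambda>v. norm v * F v)"
    and "integrable lborel (\<lambda>v. norm v * H v)"
  shows "dT1 (Phi lam mu g F) (Phi lam mu g H)
           \<le> ereal (1 - (1 - lam / (lam + mu)) / (4 * real CARD('n))) * dT1 F H"
proof (rule dT1_le_scaled[OF _ assms(9,10)])
  have "0 < lam / (lam + mu)" "2 \<le> real CARD('n)"
    using assms(1-3) by auto
  then show "0 < 1 - (1 - lam / (lam + mu)) / (4 * real CARD('n))"
    by (simp add: divide_less_eq)
  show "norm (fourier (Phi lam mu g F) \<xi> - fourier (Phi lam mu g H) \<xi>)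
          \<le> (1 - (1 - lam / (lam + mu)) / (4 * real CARD('n))) * d * norm \<xi>"
    if "0 \<le> d" "\<And>\<eta>. norm (fourier F \<eta> - fourier H \<eta>) \<le> d * norm \<eta>" "\<xi> \<noteq> 0" for d \<xi>
    using fourier_Phi_diff_le[OF assms(1-4,9,10) that(3,1,2)] .
qed

end
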